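(* Let $M$ be a finite set of integers in $[-t,t]$ for an integer $t\ge1$, and let $K\ge2$ be an integer. For each $m\in M$ set $m'=\frac{m}{t\sqrt K}$ and define $X=\{\ell_m=(-\sqrt{1-m'^2},m',0)^\top: m\in M\}\cup\{r_m=(\sqrt{1-m'^2},0,m')^\top: m\in M\}\subseteq S^2$, and let $k=2K$. If $M$ has a $K$-subset with zero sum, then $X$ has a $k$-subset $T$ with centroid $z_T=0$. Otherwise, every $k$-subset $T\subseteq X$ satisfies $\|z_T\|\ge\frac{1}{2tK^{3/2}}$.
   Context: The centroid of a finite set $T\subseteq\mathbb{R}^3$ is $z_T=\frac{1}{|T|}\sum_{u\in T}u$; $\|\cdot\|$ is the Euclidean norm and $S^2$ the unit sphere in $\mathbb{R}^3$. *)

theory Defs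
  imports "HOL-Analysis.Analysis"
begin

definition centroid :: "(real^3) set \<Rightarrow> real^3" where
  "centroid T = (1 / real (card T)) *\<^sub>R (\<Sum>u\<in>T. u)"

definition mprime :: "int \<Rightarrow> nat \<Rightarrow> int \<Rightarrow> real" where
  "mprime t K m = real_of_int m / (real_of_int t * sqrt (real K))"

definition lpt :: "int \<Rightarrow> nat \<Rightarrow> int \<Rightarrow> real^3" where
  "lpt t K m = vector [- sqrt (1 - (mprime t K m)\<^sup>2), mprime t K m, 0]"

definition rpt :: "int \<Rightarrow> nat \<Rightarrow> int \<Rightarrow> real^3" where
  "rpt t K m = vector [sqrt (1 - (mprime t K m)\<^sup>2), 0, mprime t K m]"

definition Xset :: "int \<Rightarrow> nat \<Rightarrow> int set \<Rightarrow> (real^3) set" where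
  "Xset t K M = lpt t K ` M \<union> rpt t K ` M"

end

theory Submission
  imports Defs
begin

text \<open>
  Write \<open>s\<^sub>m = sqrt (1 - m'\<^sup>2)\<close>. A \<open>k\<close>-subset \<open>T\<close> of \<open>X\<close> consists of left points
  \<open>\<ell>\<^sub>m\<close>, \<open>m \<in> A\<close>, and right points \<open>r\<^sub>m\<close>, \<open>m \<in> B\<close>, with \<open>|A| + |B| = 2K\<close>; its
  coordinate sum is \<open>(\<Sigma>\<^sub>B s\<^sub>m - \<Sigma>\<^sub>A s\<^sub>m, \<Sigma>\<^sub>A m', \<Sigma>\<^sub>B m')\<close>. Taking
  \<open>A = B = S\<close> for a zero-sum \<open>K\<close>-subset \<open>S\<close> gives centroid \<open>0\<close>. Otherwise, if
  \<open>|A| = K\<close> the second coordinate is a nonzero integer divided by \<open>t sqrt K\<close>;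
  if \<open>|A| \<noteq> K\<close> the sides are unbalanced by at least two points, and since every
  \<open>s\<^sub>m\<close> lies in \<open>[1 - 2/(3K), 1]\<close> the first coordinate has modulus at least \<open>1\<close>.
\<close>

lemma lpt_component [simp]:
  "lpt t K m $ 1 = - sqrt (1 - (mprime t K m)\<^sup>2)"
  "lpt t K m $ 2 = mprime t K m"
  "lpt t K m $ 3 = 0"
  by (simp_all add: lpt_def)

lemma rpt_component [simp]:
  "rpt t K m $ 1 = sqrt (1 - (mprime t K m)\<^sup>2)"
  "rpt t K m $ 2 = 0"
  "rpt t K m $ 3 = mprime t K m"
  by (simp_all add: rpt_def)

lemma sum_mprime:
  "(\<Sum>m\<in>A. mprime t K m) = real_of_int (\<Sum>m\<in>A. m) / (real_of_int t * sqrt (real K))"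
  by (simp add: mprime_def sum_divide_distrib)

lemma mprime_square_le:
  assumes "\<bar>m\<bar> \<le> t"
  shows "(mprime t K m)\<^sup>2 \<le> 1 / real K"
proof -
  have "\<bar>real_of_int m\<bar> \<le> \<bar>real_of_int t\<bar>"
    using assms by linarith
  then have "(real_of_int m)\<^sup>2 \<le> (real_of_int t)\<^sup>2"
    by (simp add: abs_le_square_iff)
  then have "(real_of_int m)\<^sup>2 / ((real_of_int t)\<^sup>2 * real K) \<le> 1 / real K"
    by (cases "t = 0") (simp_all add: divide_simps)
  then show ?thesis
    by (simp add: mprime_def power_divide power_mult_distrib)
qed

lemma sqrt_one_minus_lower_bound:
  fixes k x :: real
  assumes "4/3 \<le> k" "x \<le> 1 / k"
  shows "1 - 2 / (3 * k) \<le> sqrt (1 - x)"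
proof (rule real_le_rsqrt)
  have "(1 - 2 / (3 * k))\<^sup>2 \<le> 1 - 1 / k"
    using assms(1) by (simp add: power2_eq_square field_simps)
  then show "(1 - 2 / (3 * k))\<^sup>2 \<le> 1 - x"
    using assms(2) by linarith
qed

lemma inj_mprime:
  assumes "t \<noteq> 0" "K > 0"
  shows "inj (mprime t K)"
  using assms by (auto simp: inj_def mprime_def)

lemma inj_lpt:
  assumes "t \<noteq> 0" "K > 0"
  shows "inj (lpt t K)"
  using inj_mprime[OF assms] by (auto simp: inj_def dest: arg_cong[where f = "\<lambda>v. v $ 2"])

lemma inj_rpt:
  assumes "t \<noteq> 0" "K > 0"
  shows "inj (rpt t K)"
  using inj_mprime[OF assms] by (auto simp: inj_def dest: arg_cong[where f = "\<lambda>v. v $ 3"])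

text \<open>The bound on \<open>b\<close> is needed because \<open>sqrt\<close> is negative on negative arguments.\<close>

lemma lpt_neq_rpt:
  assumes "(mprime t K a)\<^sup>2 < 1" "(mprime t K b)\<^sup>2 \<le> 1"
  shows "lpt t K a \<noteq> rpt t K b"
proof
  assume "lpt t K a = rpt t K b"
  then have "- sqrt (1 - (mprime t K a)\<^sup>2) = sqrt (1 - (mprime t K b)\<^sup>2)"
    by (metis lpt_component(1) rpt_component(1))
  moreover have "sqrt (1 - (mprime t K a)\<^sup>2) > 0"
    using assms by simp
  ultimately show False
    using assms(2) real_sqrt_ge_zero[of "1 - (mprime t K b)\<^sup>2"] by linarith
qed

lemma abs_sum_mprime_ge:
  assumes "(\<Sum>m\<in>A. m) \<noteq> 0"
  shows "1 / (real_of_int t * sqrt (real K)) \<le> \<bar>\<Sum>m\<in>A. mprime t K m\<bar>"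
proof -
  have "1 \<le> \<bar>real_of_int (\<Sum>m\<in>A. m)\<bar>"
    using assms by linarith
  then have "1 / \<bar>real_of_int t * sqrt (real K)\<bar> \<le> \<bar>real_of_int (\<Sum>m\<in>A. m)\<bar> / \<bar>real_of_int t * sqrt (real K)\<bar>"
    by (simp add: divide_right_mono)
  moreover have "1 / (real_of_int t * sqrt (real K)) \<le> 1 / \<bar>real_of_int t * sqrt (real K)\<bar>"
    by (cases "real_of_int t * sqrt (real K) \<ge> 0") simp_all
  ultimately show ?thesis
    by (simp add: sum_mprime abs_divide)
qed

lemma sum_diff_ge_one_if_unbalanced:
  fixes s :: "'a \<Rightarrow> real" and K :: nat
  assumes "K \<ge> 2" "K + 1 \<le> card A" "card B + 1 \<le> K"
    and "\<forall>x\<in>A. 1 - 2 / (3 * real K) \<le> s x" "\<forall>x\<in>B. s x \<le> 1"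
  shows "1 \<le> sum s A - sum s B"
proof -
  have "real (K + 1) * (1 - 2 / (3 * real K)) \<le> real (card A) * (1 - 2 / (3 * real K))"
    using assms(1,2) by (intro mult_right_mono) (simp_all add: field_simps)
  also have "\<dots> \<le> sum s A"
    using assms(4) sum_bounded_below[of A "1 - 2 / (3 * real K)" s] by simp
  finally have "real (K + 1) * (1 - 2 / (3 * real K)) \<le> sum s A" .
  moreover have "sum s B \<le> real K - 1"
    using assms(3,5) sum_bounded_above[of B s 1] by simp
  moreover have "1 + (real K - 1) \<le> real (K + 1) * (1 - 2 / (3 * real K))"
    using assms(1) by (simp add: field_simps)
  ultimately show ?thesis
    by linarith
qed

lemma powr_three_halves:
  fixes x :: real
  assumes "0 \<le> x"
  shows "x powr (3/2) = x * sqrt x"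
proof -
  have "x powr (3/2) = x powr (1 + 1/2)"
    by simp
  also have "\<dots> = x powr 1 * x powr (1/2)"
    by (rule powr_add)
  finally show ?thesis
    using assms by (cases "x = 0") (simp_all add: powr_half_sqrt)
qed

lemma subset_XsetE:
  assumes "T \<subseteq> Xset t K M"
  obtains A B where "A \<subseteq> M" "B \<subseteq> M" "T = lpt t K ` A \<union> rpt t K ` B"
proof
  show "T = lpt t K ` {m\<in>M. lpt t K m \<in> T} \<union> rpt t K ` {m\<in>M. rpt t K m \<in> T}"
    using assms by (auto simp: Xset_def)
qed auto

context
  fixes t :: int and K :: nat
  assumes t_pos: "t \<ge> 1" and K_ge_2: "K \<ge> 2"
begin

lemma mprime_square_less_one:
  assumes "\<bar>m\<bar> \<le> t"
  shows "(mprime t K m)\<^sup>2 < 1"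
proof -
  have "1 / real K \<le> 1 / 2"
    using K_ge_2 by (simp add: divide_simps)
  then show ?thesis
    using mprime_square_le[OF assms, of K] by linarith
qed

lemma card_sum_lpt_rpt_image:
  assumes "finite A" "finite B" "\<forall>m\<in>A \<union> B. \<bar>m\<bar> \<le> t"
  shows "card (lpt t K ` A \<union> rpt t K ` B) = card A + card B"
    and "(\<Sum>u\<in>lpt t K ` A \<union> rpt t K ` B. u) = (\<Sum>m\<in>A. lpt t K m) + (\<Sum>m\<in>B. rpt t K m)"
proof -
  have inj: "inj (lpt t K)" "inj (rpt t K)"
    using t_pos K_ge_2 by (simp_all add: inj_lpt inj_rpt)
  have "lpt t K ` A \<inter> rpt t K ` B = {}"
    using assms(3) mprime_square_less_one lpt_neq_rpt less_imp_le by blast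
  then show "card (lpt t K ` A \<union> rpt t K ` B) = card A + card B"
    and "(\<Sum>u\<in>lpt t K ` A \<union> rpt t K ` B. u) = (\<Sum>m\<in>A. lpt t K m) + (\<Sum>m\<in>B. rpt t K m)"
    using assms(1,2) inj
    by (simp_all add: card_Un_disjoint sum.union_disjoint card_image sum.reindex inj_on_subset)
qed

lemma centroid_lpt_rpt_image_eq_0:
  assumes "card S = K" "(\<Sum>m\<in>S. m) = 0" "\<forall>m\<in>S. \<bar>m\<bar> \<le> t"
  shows "card (lpt t K ` S \<union> rpt t K ` S) = 2 * K"
    and "centroid (lpt t K ` S \<union> rpt t K ` S) = 0"
proof -
  have "finite S"
    using assms(1) K_ge_2 card.infinite by fastforce
  note image_S = card_sum_lpt_rpt_image[OF this this, unfolded Un_absorb, OF assms(3)]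
  show "card (lpt t K ` S \<union> rpt t K ` S) = 2 * K"
    using image_S(1) assms(1) by simp
  have "(\<Sum>m\<in>S. mprime t K m) = 0"
    by (simp add: sum_mprime assms(2))
  then have "(\<Sum>u\<in>lpt t K ` S \<union> rpt t K ` S. u) = 0"
    unfolding image_S(2) vec_eq_iff forall_3 by (simp add: sum_negf)
  then show "centroid (lpt t K ` S \<union> rpt t K ` S) = 0"
    by (simp add: centroid_def)
qed

lemma norm_centroid_lpt_rpt_image_ge:
  assumes "finite A" "finite B" "\<forall>m\<in>A \<union> B. \<bar>m\<bar> \<le> t" "card A + card B = 2 * K"
    and "card A = K \<Longrightarrow> (\<Sum>m\<in>A. m) \<noteq> 0"
  shows "1 / (2 * real_of_int t * real K powr (3/2)) \<le> norm (centroid (lpt t K ` A \<union> rpt t K ` B))"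
proof -
  define v where "v = (\<Sum>m\<in>A. lpt t K m) + (\<Sum>m\<in>B. rpt t K m)"
  have centroid_eq: "centroid (lpt t K ` A \<union> rpt t K ` B) = (1 / (2 * real K)) *\<^sub>R v"
    using card_sum_lpt_rpt_image[OF assms(1-3)] assms(4) by (simp add: centroid_def v_def)
  have "1 \<le> real_of_int t * sqrt (real K)"
    using t_pos K_ge_2 mult_mono[of 1 "real_of_int t" 1 "sqrt (real K)"] by simp
  then have scale_le_1: "1 / (real_of_int t * sqrt (real K)) \<le> 1"
    by simp
  have "1 / (real_of_int t * sqrt (real K)) \<le> norm v"
  proof (cases "card A = K")
    case True
    then have "1 / (real_of_int t * sqrt (real K)) \<le> \<bar>v $ 2\<bar>"
      using abs_sum_mprime_ge assms(5) by (simp add: v_def)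
    then show ?thesis
      using component_le_norm_cart[of v 2] by linarith
  next
    case False
    define s where "s m = sqrt (1 - (mprime t K m)\<^sup>2)" for m
    have "1 - 2 / (3 * real K) \<le> s m" if "m \<in> A \<union> B" for m
      unfolding s_def
    proof (rule sqrt_one_minus_lower_bound)
      show "4/3 \<le> real K"
        using K_ge_2 by simp
      show "(mprime t K m)\<^sup>2 \<le> 1 / real K"
        using assms(3) that by (simp add: mprime_square_le)
    qed
    then have s_lower: "\<forall>m\<in>A. 1 - 2 / (3 * real K) \<le> s m" "\<forall>m\<in>B. 1 - 2 / (3 * real K) \<le> s m"
      by simp_all
    have s_upper: "\<forall>m\<in>A. s m \<le> 1" "\<forall>m\<in>B. s m \<le> 1"
      by (simp_all add: s_def)
    have "v $ 1 = sum s B - sum s A"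
      by (simp add: v_def s_def sum_negf)
    moreover have "1 \<le> sum s A - sum s B \<or> 1 \<le> sum s B - sum s A"
      using False assms(4) K_ge_2
        sum_diff_ge_one_if_unbalanced[of K A B s] sum_diff_ge_one_if_unbalanced[of K B A s]
        s_lower s_upper
      by linarith
    ultimately have "1 \<le> \<bar>v $ 1\<bar>"
      by linarith
    then show ?thesis
      using component_le_norm_cart[of v 1] scale_le_1 by linarith
  qed
  then show ?thesis
    using K_ge_2 by (simp add: centroid_eq powr_three_halves divide_simps)
qed

end

theorem lemma18:
  fixes M :: "int set" and t :: int and K :: nat
  assumes "finite M" and "t \<ge> 1" and "\<forall>m\<in>M. - t \<le> m \<and> m \<le> t" and "K \<ge> 2"
  shows "((\<exists>S\<subseteq>M. card S = K \<and> (\<Sum>m\<in>S. m) = 0) \<longrightarrow>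
            (\<exists>T\<subseteq>Xset t K M. card T = 2 * K \<and> centroid T = 0))
       \<and> ((\<not> (\<exists>S\<subseteq>M. card S = K \<and> (\<Sum>m\<in>S. m) = 0)) \<longrightarrow>
            (\<forall>T\<subseteq>Xset t K M. card T = 2 * K \<longrightarrow>
               norm (centroid T) \<ge> 1 / (2 * real_of_int t * real K powr (3/2))))"
proof -
  have range: "\<forall>m\<in>M. \<bar>m\<bar> \<le> t"
    using assms(3) by auto
  show ?thesis
  proof (intro conjI impI allI)
    assume "\<exists>S\<subseteq>M. card S = K \<and> (\<Sum>m\<in>S. m) = 0"
    then obtain S where S: "S \<subseteq> M" "card S = K" "(\<Sum>m\<in>S. m) = 0"
      by blast
    then have "\<forall>m\<in>S. \<bar>m\<bar> \<le> t"
      using range by blast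
    note centroid_0 = centroid_lpt_rpt_image_eq_0[OF assms(2,4) S(2,3) this]
    have "lpt t K ` S \<union> rpt t K ` S \<subseteq> Xset t K M"
      using S(1) by (auto simp: Xset_def)
    with centroid_0 show "\<exists>T\<subseteq>Xset t K M. card T = 2 * K \<and> centroid T = 0"
      by blast
  next
    fix T
    assume no_zero_sum: "\<not> (\<exists>S\<subseteq>M. card S = K \<and> (\<Sum>m\<in>S. m) = 0)"
      and T: "T \<subseteq> Xset t K M" "card T = 2 * K"
    obtain A B where AB: "A \<subseteq> M" "B \<subseteq> M" "T = lpt t K ` A \<union> rpt t K ` B"
      using subset_XsetE[OF T(1)] .
    have finite: "finite A" "finite B"
      using AB(1,2) assms(1) finite_subset by blast+
    have range_AB: "\<forall>m\<in>A \<union> B. \<bar>m\<bar> \<le> t"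
      using AB(1,2) range by blast
    have "card A + card B = 2 * K"
      using card_sum_lpt_rpt_image(1)[OF assms(2,4) finite range_AB] AB(3) T(2) by simp
    moreover have "card A = K \<Longrightarrow> (\<Sum>m\<in>A. m) \<noteq> 0"
      using no_zero_sum AB(1) by blast
    ultimately show "1 / (2 * real_of_int t * real K powr (3/2)) \<le> norm (centroid T)"
      unfolding AB(3) by (rule norm_centroid_lpt_rpt_image_ge[OF assms(2,4) finite range_AB])
  qed
qed

end
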